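(* Assume the Mixing, Uniformly Bounded Functions and Uniform Bracketing Entropy assumptions. For $g\in\mathcal G^*$ let $h_g(Z)=\mathbb E[g_A(S,U)\mid Z]$. Then \[ \sup_{g\in\mathcal G^*}\Big|\frac1n\sum_{i=1}^nh_g(Z_i)^2-\mathbb E[h_g(Z)^2]\Big|=o_p(1). \]
   Context: Setting: MDPUC with finite state space $\mathcal S$, actions $[m]$, confounder space $\mathcal U$ and iid confounders; data $Z_i=(S_i,A_i,S_i')$, $i\in[n]$, generated by a behavior policy from a stationary chain of $X=(Z,U)$; expectations are under this stationary distribution; $n\to\infty$. Mixing: for some $2<p\le\infty$, $\sum_kk^{2/(p-2)}\beta(k)<\infty$ for the $\beta$-mixing coefficients of the $X$-chain. $\mathcal G$ is a normed class of $g=(g_1,\dots,g_m)$, $g_a:\mathcal S\times\mathcal U\to\mathbb R$; $\mathcal G^*=\{g/\|g\|:g\in\mathcal G,\|g\|>0\}$; $\mathcal G^*_a=\{g_a:g\in\mathcal G^*\}$. Uniformly Bounded Functions: there is $0<G<\infty$ with $g_a(s,u)\le G$ for all $g\in\mathcal G^*$, $a,s,u$. Uniform Bracketing Entropy: $\int_0^\infty\sqrt{\log N_{[]}(\epsilon,\mathcal G^*_a,L_p)}d\epsilon<\infty$ for each $a$, with $p$ as in Mixing, $N_{[]}$ the bracketing number. *)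

theory Defs
  imports "HOL-Probability.Probability"
begin

definition gen_sets :: "'w measure \<Rightarrow> 'x measure \<Rightarrow> (nat \<Rightarrow> 'w \<Rightarrow> 'x) \<Rightarrow> nat set \<Rightarrow> 'w set set" where
  "gen_sets M MX X I =
     sets (sigma (space M) (\<Union>j\<in>I. {X j -` B \<inter> space M | B. B \<in> sets MX}))"

definition rv_sets :: "'w measure \<Rightarrow> 'y measure \<Rightarrow> ('w \<Rightarrow> 'y) \<Rightarrow> 'w set set" where
  "rv_sets M N f = sets (vimage_algebra (space M) f N)"

definition join_sets :: "'w measure \<Rightarrow> 'w set set \<Rightarrow> 'w set set \<Rightarrow> 'w set set" where
  "join_sets M F G = sets (sigma (space M) (F \<union> G))"

definition cond_indep :: "'w measure \<Rightarrow> 'w set set \<Rightarrow> 'w set set \<Rightarrow> 'w set set \<Rightarrow> bool" where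
  "cond_indep M Y F G =
     (\<forall>B\<in>Y. AE \<omega> in M.
        real_cond_exp M (sigma (space M) (F \<union> G)) (indicator B) \<omega>
        = real_cond_exp M (sigma (space M) G) (indicator B) \<omega>)"

definition finite_partition_in :: "'w measure \<Rightarrow> 'w set set \<Rightarrow> 'w set set \<Rightarrow> bool" where
  "finite_partition_in M A P \<longleftrightarrow> finite P \<and> P \<subseteq> A \<and> disjoint P \<and> \<Union>P = space M"

definition beta_coef :: "'w measure \<Rightarrow> 'w set set \<Rightarrow> 'w set set \<Rightarrow> real" where
  "beta_coef M A B =
     (SUP PQ \<in> {(P, Q). finite_partition_in M A P \<and> finite_partition_in M B Q}.
        (1/2) * (\<Sum>a\<in>fst PQ. \<Sum>b\<in>snd PQ.
                    \<bar>measure M (a \<inter> b) - measure M a * measure M b\<bar>))"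

definition beta_mix :: "'w measure \<Rightarrow> 'x measure \<Rightarrow> (nat \<Rightarrow> 'w \<Rightarrow> 'x) \<Rightarrow> nat \<Rightarrow> real" where
  "beta_mix M MX X k = (SUP n. beta_coef M (gen_sets M MX X {..n}) (gen_sets M MX X {n+k..}))"

definition strictly_stationary :: "'w measure \<Rightarrow> 'x measure \<Rightarrow> (nat \<Rightarrow> 'w \<Rightarrow> 'x) \<Rightarrow> bool" where
  "strictly_stationary M MX X \<longleftrightarrow>
     (\<forall>k n. distr M (PiM {..<n} (\<lambda>_. MX)) (\<lambda>\<omega>. \<lambda>j\<in>{..<n}. X (k + j) \<omega>)
          = distr M (PiM {..<n} (\<lambda>_. MX)) (\<lambda>\<omega>. \<lambda>j\<in>{..<n}. X j \<omega>))"

definition outer_prob :: "'w measure \<Rightarrow> 'w set \<Rightarrow> real" where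
  "outer_prob M A = Inf {measure M B | B. B \<in> sets M \<and> A \<inter> space M \<subseteq> B}"

definition lp_le :: "'x measure \<Rightarrow> ereal \<Rightarrow> ('x \<Rightarrow> real) \<Rightarrow> real \<Rightarrow> bool" where
  "lp_le \<mu> p f \<epsilon> =
     (if p = \<infinity> then (AE x in \<mu>. \<bar>f x\<bar> \<le> \<epsilon>)
      else (\<epsilon> \<ge> 0 \<and> (\<integral>\<^sup>+ x. ennreal (\<bar>f x\<bar> powr real_of_ereal p) \<partial>\<mu>)
                        \<le> ennreal (\<epsilon> powr real_of_ereal p)))"

definition bracket_cover :: "'x measure \<Rightarrow> ereal \<Rightarrow> real \<Rightarrow> ('x \<Rightarrow> real) set
                              \<Rightarrow> (('x \<Rightarrow> real) \<times> ('x \<Rightarrow> real)) set \<Rightarrow> bool" where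
  "bracket_cover \<mu> p \<epsilon> F B \<longleftrightarrow> finite B \<and>
     (\<forall>(l, u)\<in>B. l \<in> borel_measurable \<mu> \<and> u \<in> borel_measurable \<mu> \<and>
                 (\<forall>x\<in>space \<mu>. l x \<le> u x) \<and> lp_le \<mu> p (\<lambda>x. u x - l x) \<epsilon>) \<and>
     (\<forall>f\<in>F. \<exists>(l, u)\<in>B. \<forall>x\<in>space \<mu>. l x \<le> f x \<and> f x \<le> u x)"

text \<open>bracketing number (infinity if no finite cover exists)\<close>
definition bracket_num :: "'x measure \<Rightarrow> ereal \<Rightarrow> real \<Rightarrow> ('x \<Rightarrow> real) set \<Rightarrow> enat" where
  "bracket_num \<mu> p \<epsilon> F = Inf {enat (card B) | B. bracket_cover \<mu> p \<epsilon> F B}"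

definition sqrt_log_bracket :: "'x measure \<Rightarrow> ereal \<Rightarrow> ('x \<Rightarrow> real) set \<Rightarrow> real \<Rightarrow> ennreal" where
  "sqrt_log_bracket \<mu> p F \<epsilon> =
     (if bracket_num \<mu> p \<epsilon> F = \<infinity> then \<infinity>
      else ennreal (sqrt (ln (max 1 (real (the_enat (bracket_num \<mu> p \<epsilon> F)))))))"

definition finite_bracketing_integral :: "'x measure \<Rightarrow> ereal \<Rightarrow> ('x \<Rightarrow> real) set \<Rightarrow> bool" where
  "finite_bracketing_integral \<mu> p F \<longleftrightarrow>
     (\<integral>\<^sup>+ \<epsilon>\<in>{0<..}. sqrt_log_bracket \<mu> p F \<epsilon> \<partial>lborel) < \<infinity>"

definition mix_exponent :: "ereal \<Rightarrow> real" where
  "mix_exponent p = (if p = \<infinity> then 0 else 2 / (real_of_ereal p - 2))"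

definition is_norm_on_fun :: "(('a \<Rightarrow> 'x \<Rightarrow> real) \<Rightarrow> real) \<Rightarrow> bool" where
  "is_norm_on_fun nrm \<longleftrightarrow>
     (\<forall>g. nrm g \<ge> 0) \<and> (\<forall>g. nrm g = 0 \<longrightarrow> g = (\<lambda>a x. 0)) \<and>
     (\<forall>c g. nrm (\<lambda>a x. c * g a x) = \<bar>c\<bar> * nrm g) \<and>
     (\<forall>g h. nrm (\<lambda>a x. g a x + h a x) \<le> nrm g + nrm h)"

definition normalized_class :: "('a \<Rightarrow> 'x \<Rightarrow> real) set \<Rightarrow> (('a \<Rightarrow> 'x \<Rightarrow> real) \<Rightarrow> real)
                                  \<Rightarrow> ('a \<Rightarrow> 'x \<Rightarrow> real) set" where
  "normalized_class G nrm = {(\<lambda>a x. g a x / nrm g) | g. g \<in> G \<and> nrm g > 0}"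

definition stS :: "('s \<times> 'a \<times> 's) \<times> 'u \<Rightarrow> 's" where "stS x = fst (fst x)"
definition acA :: "('s \<times> 'a \<times> 's) \<times> 'u \<Rightarrow> 'a" where "acA x = fst (snd (fst x))"
definition stS' :: "('s \<times> 'a \<times> 's) \<times> 'u \<Rightarrow> 's" where "stS' x = snd (snd (fst x))"
definition cfU :: "('s \<times> 'a \<times> 's) \<times> 'u \<Rightarrow> 'u" where "cfU x = snd x"
definition obsZ :: "('s \<times> 'a \<times> 's) \<times> 'u \<Rightarrow> 's \<times> 'a \<times> 's" where "obsZ x = fst x"

end

theory Submission
  imports Defs
begin

text \<open>
  The observation Z = (S, A, S') takes finitely many values. Hence h_g(Z_i) equals c_g(Z_i)
  almost surely, where c_g(z) = E[g_A(S, U); Z = z] / P(Z = z) is bounded by G and, by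
  stationarity, does not depend on i. Writing F_n(z) for the frequency of z among Z_1, ..., Z_n,
  the deviation in the theorem is therefore sum_z c_g(z)^2 (F_n(z) - P(Z = z)), which is at most
  |S x A x S| G^2 max_z |F_n(z) - P(Z = z)| uniformly in g. The indicators of Z_i = z and Z_j = z
  have covariance at most 2 beta(j - i), which is summable by the mixing condition, so Chebyshev's
  inequality gives P(|F_n(z) - P(Z = z)| > eta) = O(1/n).
\<close>

section \<open>Beta-mixing coefficients and stationarity\<close>

lemma partition_covariance_sum_le_2:
  assumes "prob_space M"
    and P: "finite_partition_in M A P" and Q: "finite_partition_in M B Q"
    and "A \<subseteq> sets M" "B \<subseteq> sets M"
  shows "(\<Sum>a\<in>P. \<Sum>b\<in>Q. \<bar>measure M (a \<inter> b) - measure M a * measure M b\<bar>) \<le> 2"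
proof -
  interpret prob_space M by fact
  have P': "finite P" "P \<subseteq> sets M" "disjoint P" "\<Union>P = space M"
    and Q': "finite Q" "Q \<subseteq> sets M" "disjoint Q" "\<Union>Q = space M"
    using assms unfolding finite_partition_in_def by auto
  have total_P: "(\<Sum>a\<in>P. measure M a) = 1"
    using measure_Union'[OF P'(1), of M] P' by (simp add: fmeasurable_eq_sets subset_iff prob_space)
  have total_Q: "(\<Sum>b\<in>Q. measure M b) = 1"
    using measure_Union'[OF Q'(1), of M] Q' by (simp add: fmeasurable_eq_sets subset_iff prob_space)
  have marginal: "(\<Sum>b\<in>Q. measure M (a \<inter> b)) = measure M a" if "a \<in> P" for a
  proof -
    have "a \<in> sets M" "a \<subseteq> space M" using that P' by auto
    moreover have "pairwise (\<lambda>b b'. disjnt (a \<inter> b) (a \<inter> b')) Q"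
      using Q'(3) unfolding pairwise_def disjnt_def by blast
    ultimately have "measure M (\<Union>b\<in>Q. a \<inter> b) = (\<Sum>b\<in>Q. measure M (a \<inter> b))"
      using Q' by (intro measure_UNION') (auto simp: fmeasurable_eq_sets)
    moreover have "(\<Union>b\<in>Q. a \<inter> b) = a" using \<open>a \<subseteq> space M\<close> Q'(4) by blast
    ultimately show ?thesis by simp
  qed
  have "(\<Sum>a\<in>P. \<Sum>b\<in>Q. \<bar>measure M (a \<inter> b) - measure M a * measure M b\<bar>)
      \<le> (\<Sum>a\<in>P. \<Sum>b\<in>Q. measure M (a \<inter> b) + measure M a * measure M b)"
    by (intro sum_mono) (simp add: abs_le_iff)
  also have "\<dots> = (\<Sum>a\<in>P. measure M a) + (\<Sum>a\<in>P. measure M a) * (\<Sum>b\<in>Q. measure M b)"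
    by (simp add: sum.distrib marginal sum_product)
  finally show ?thesis using total_P total_Q by simp
qed

lemma bdd_above_partition_covariances:
  assumes "prob_space M" "A \<subseteq> sets M" "B \<subseteq> sets M"
  shows "bdd_above ((\<lambda>PQ. (1/2) * (\<Sum>a\<in>fst PQ. \<Sum>b\<in>snd PQ.
                    \<bar>measure M (a \<inter> b) - measure M a * measure M b\<bar>)) `
      {(P, Q). finite_partition_in M A P \<and> finite_partition_in M B Q})"
  using partition_covariance_sum_le_2[OF assms(1) _ _ assms(2,3)]
  by (intro bdd_aboveI[where M=1]) fastforce

lemma beta_coef_le_1:
  assumes "prob_space M" "A \<subseteq> sets M" "B \<subseteq> sets M" "space M \<in> A" "space M \<in> B"
  shows "beta_coef M A B \<le> 1"
  unfolding beta_coef_def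
proof (rule cSUP_least)
  have "finite_partition_in M A {space M}" "finite_partition_in M B {space M}"
    using assms unfolding finite_partition_in_def by auto
  then show "{(P, Q). finite_partition_in M A P \<and> finite_partition_in M B Q} \<noteq> {}" by auto
qed (use partition_covariance_sum_le_2[OF assms(1) _ _ assms(2,3)] in fastforce)

lemma abs_covariance_le_beta_coef:
  assumes "prob_space M" "A \<subseteq> sets M" "B \<subseteq> sets M"
    and a: "a \<in> A" "space M - a \<in> A" and b: "b \<in> B" "space M - b \<in> B"
  shows "\<bar>measure M (a \<inter> b) - measure M a * measure M b\<bar> \<le> 2 * beta_coef M A B"
proof -
  let ?cov = "\<lambda>a b. \<bar>measure M (a \<inter> b) - measure M a * measure M b\<bar>"
  have "a \<subseteq> space M" "b \<subseteq> space M"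
    using assms sets.sets_into_space by blast+
  then have "finite_partition_in M A {a, space M - a}" "finite_partition_in M B {b, space M - b}"
    using a b unfolding finite_partition_in_def by (auto simp: pairwise_def disjnt_def)
  then have "(1/2) * (\<Sum>a'\<in>{a, space M - a}. \<Sum>b'\<in>{b, space M - b}. ?cov a' b') \<le> beta_coef M A B"
    unfolding beta_coef_def
    by (intro cSUP_upper2[OF bdd_above_partition_covariances[OF assms(1-3)],
          of "({a, space M - a}, {b, space M - b})"]) auto
  moreover have "?cov a b \<le> (\<Sum>b'\<in>{b, space M - b}. ?cov a b')"
    by (rule member_le_sum) auto
  moreover have "\<dots> \<le> (\<Sum>a'\<in>{a, space M - a}. \<Sum>b'\<in>{b, space M - b}. ?cov a' b')"
    by (rule member_le_sum[where f = "\<lambda>a'. \<Sum>b'\<in>{b, space M - b}. ?cov a' b'"])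
       (auto intro: sum_nonneg)
  ultimately show ?thesis by linarith
qed

lemma gen_sets_eq_sigma_sets:
  "gen_sets M MX X I = sigma_sets (space M) (\<Union>j\<in>I. {X j -` B \<inter> space M | B. B \<in> sets MX})"
  unfolding gen_sets_def by (rule sets_measure_of) auto

lemma gen_sets_subset_sets:
  assumes "\<And>i. X i \<in> M \<rightarrow>\<^sub>M MX"
  shows "gen_sets M MX X I \<subseteq> sets M"
  unfolding gen_sets_eq_sigma_sets
  by (rule sets.sigma_sets_subset) (use assms in \<open>auto intro: measurable_sets\<close>)

lemma space_in_gen_sets: "space M \<in> gen_sets M MX X I"
  unfolding gen_sets_eq_sigma_sets by (rule sigma_sets_top)

lemma vimage_in_gen_sets:
  assumes "B \<in> sets MX" "i \<in> I"
  shows "X i -` B \<inter> space M \<in> gen_sets M MX X I"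
    and "space M - (X i -` B \<inter> space M) \<in> gen_sets M MX X I"
  using assms unfolding gen_sets_eq_sigma_sets
  by (blast intro: sigma_sets.Basic sigma_sets.Compl)+

lemma beta_mix_covariance_le:
  assumes "prob_space M" and X: "\<And>i. X i \<in> M \<rightarrow>\<^sub>M MX" and "B \<in> sets MX" "C \<in> sets MX"
  defines "A \<equiv> \<lambda>i D. X i -` D \<inter> space M"
  shows "\<bar>measure M (A n B \<inter> A (n + k) C) - measure M (A n B) * measure M (A (n + k) C)\<bar>
           \<le> 2 * beta_mix M MX X k"
proof -
  let ?past = "gen_sets M MX X {..n}" and ?future = "\<lambda>n. gen_sets M MX X {n + k..}"
  have "beta_coef M ?past (?future n) \<le> beta_mix M MX X k"
    unfolding beta_mix_def
    by (rule cSUP_upper)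
       (auto intro!: bdd_aboveI2 beta_coef_le_1 assms(1) gen_sets_subset_sets X space_in_gen_sets)
  moreover have "\<bar>measure M (A n B \<inter> A (n + k) C) - measure M (A n B) * measure M (A (n + k) C)\<bar>
      \<le> 2 * beta_coef M ?past (?future n)"
    unfolding A_def using assms(3,4)
    by (intro abs_covariance_le_beta_coef assms(1) gen_sets_subset_sets X vimage_in_gen_sets) auto
  ultimately show ?thesis by linarith
qed

lemma beta_mix_nonneg:
  assumes "prob_space M" "\<And>i. X i \<in> M \<rightarrow>\<^sub>M MX"
  shows "0 \<le> beta_mix M MX X k"
  using beta_mix_covariance_le[OF assms(1), where X=X and MX=MX and B="space MX" and C="space MX"
      and n=0 and k=k] assms(2)
  by (smt (verit) sets.top)

lemma mixing_covariance_le: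
  assumes "prob_space M" "\<And>i. X i \<in> M \<rightarrow>\<^sub>M MX" "B \<in> sets MX" "0 \<le> e" "i < j"
  defines "A \<equiv> \<lambda>i. X i -` B \<inter> space M"
  shows "\<bar>measure M (A i \<inter> A j) - measure M (A i) * measure M (A j)\<bar>
           \<le> 2 * (real (j - i) powr e * beta_mix M MX X (j - i))"
proof -
  have "1 \<le> real (j - i) powr e"
    using assms(4,5) by (intro ge_one_powr_ge_zero) auto
  then have "beta_mix M MX X (j - i) \<le> real (j - i) powr e * beta_mix M MX X (j - i)"
    using mult_right_mono[OF _ beta_mix_nonneg[where X=X, OF assms(1,2)]] by (metis mult_1)
  moreover have "i + (j - i) = j"
    using assms(5) by simp
  ultimately show ?thesis
    using beta_mix_covariance_le[where X=X, OF assms(1,2,3,3), of i "j - i"] unfolding A_def by simp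
qed

lemma strictly_stationary_distr_eq:
  assumes "strictly_stationary M MX X" "\<And>i. X i \<in> M \<rightarrow>\<^sub>M MX"
  shows "distr M MX (X i) = distr M MX (X 0)"
proof -
  let ?window = "\<lambda>k \<omega>. \<lambda>j\<in>{..<1::nat}. X (k + j) \<omega>"
  have window: "?window k \<in> M \<rightarrow>\<^sub>M PiM {..<1} (\<lambda>_. MX)" for k
    using assms(2) by measurable
  have "distr M MX (X k) = distr (distr M (PiM {..<1} (\<lambda>_. MX)) (?window k)) MX (\<lambda>x. x 0)" for k
    by (subst distr_distr[OF _ window]) (simp_all add: comp_def)
  moreover have "distr M (PiM {..<1} (\<lambda>_. MX)) (?window i) = distr M (PiM {..<1} (\<lambda>_. MX)) (?window 0)"
    using assms(1) unfolding strictly_stationary_def by (metis add_0)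
  ultimately show ?thesis by metis
qed

section \<open>Frequencies of events with summable covariances\<close>

lemma sum_comp_inj_on_le_suminf:
  fixes w :: "nat \<Rightarrow> real"
  assumes "summable w" "\<And>k. 0 \<le> w k" "finite J" "inj_on \<phi> J"
  shows "(\<Sum>j\<in>J. w (\<phi> j)) \<le> suminf w"
  using sum_le_suminf[of w "\<phi> ` J"] assms by (simp add: sum.reindex)

lemma sum_lag_weights_le:
  fixes w :: "nat \<Rightarrow> real"
  assumes "summable w" "\<And>k. 0 \<le> w k"
  shows "(\<Sum>j<n. if j = i then 1 else w (if j < i then i - j else j - i)) \<le> 1 + 2 * suminf w"
proof -
  have "(\<Sum>j<n. if j = i then 1 else w (if j < i then i - j else j - i))
     = (\<Sum>j<n. if j = i then 1 else 0) + (\<Sum>j\<in>{j\<in>{..<n}. j < i}. w (i - j))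
       + (\<Sum>j\<in>{j\<in>{..<n}. i < j}. w (j - i))"
    unfolding sum.inter_filter[OF finite_lessThan] sum.distrib[symmetric] by (intro sum.cong) auto
  also have "\<dots> \<le> 1 + suminf w + suminf w"
  proof (intro add_mono)
    show "(\<Sum>j<n. if j = i then 1 else 0) \<le> (1::real)"
      by (cases "i < n") simp_all
    show "(\<Sum>j\<in>{j\<in>{..<n}. j < i}. w (i - j)) \<le> suminf w"
      by (rule sum_comp_inj_on_le_suminf) (use assms in \<open>auto simp: inj_on_def\<close>)
    show "(\<Sum>j\<in>{j\<in>{..<n}. i < j}. w (j - i)) \<le> suminf w"
      by (rule sum_comp_inj_on_le_suminf) (use assms in \<open>auto simp: inj_on_def\<close>)
  qed
  finally show ?thesis by simp
qed

lemma integral_square_sum_centered_indicators_le: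
  assumes "prob_space M"
    and A: "\<And>i. A i \<in> sets M" and prob_A: "\<And>i. measure M (A i) = p"
    and cov: "\<And>i j. i < j \<Longrightarrow> \<bar>measure M (A i \<inter> A j) - p * p\<bar> \<le> w (j - i)"
    and w: "summable w" "\<And>k. 0 \<le> w k"
  shows "integrable M (\<lambda>\<omega>. (\<Sum>i<n. indicator (A i) \<omega> - p)\<^sup>2)"
    and "(\<integral>\<omega>. (\<Sum>i<n. indicator (A i) \<omega> - p)\<^sup>2 \<partial>M) \<le> real n * (1 + 2 * suminf w)"
proof -
  interpret prob_space M by fact
  have product_eq: "(indicator (A i) \<omega> - p) * (indicator (A j) \<omega> - p)
      = indicator (A i \<inter> A j) \<omega> - p * indicator (A j) \<omega> - p * indicator (A i) \<omega> + p * p"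
    for i j and \<omega> :: 'a
    by (simp add: indicator_def algebra_simps)
  have integrable_product: "integrable M (\<lambda>\<omega>. (indicator (A i) \<omega> - p) * (indicator (A j) \<omega> - p))" for i j
    unfolding product_eq using A by (auto intro!: integrable_real_indicator simp: less_top[symmetric])
  have integral_product: "(\<integral>\<omega>. (indicator (A i) \<omega> - p) * (indicator (A j) \<omega> - p) \<partial>M)
      = measure M (A i \<inter> A j) - p * p" for i j
  proof -
    have "A i \<inter> A j \<in> sets M" using A by blast
    then show ?thesis
      unfolding product_eq using A[of i] A[of j] prob_A[of i] prob_A[of j]
      by (simp add: prob_space integrable_real_indicator less_top[symmetric])
  qed
  have p: "0 \<le> p" "p \<le> 1" using prob_A[of 0] by auto
  have cov_le: "\<bar>measure M (A i \<inter> A j) - p * p\<bar> \<le> (if j = i then 1 else w (if j < i then i - j else j - i))"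
    for i j
  proof (cases i j rule: linorder_cases)
    case equal
    have "p * p \<le> p" using p by (simp add: mult_left_le_one_le)
    then show ?thesis
      using equal p prob_A[of i] by (simp add: abs_le_iff) (use zero_le_square[of p] in linarith)
  qed (use cov[of i j] cov[of j i] in \<open>auto simp: Int_commute\<close>)
  have square_eq: "(\<Sum>i<n. indicator (A i) \<omega> - p)\<^sup>2
      = (\<Sum>i<n. \<Sum>j<n. (indicator (A i) \<omega> - p) * (indicator (A j) \<omega> - p))" for \<omega> :: 'a
    by (simp add: power2_eq_square sum_product)
  show "integrable M (\<lambda>\<omega>. (\<Sum>i<n. indicator (A i) \<omega> - p)\<^sup>2)"
    unfolding square_eq by (simp add: integrable_product)
  have "(\<integral>\<omega>. (\<Sum>i<n. indicator (A i) \<omega> - p)\<^sup>2 \<partial>M) = (\<Sum>i<n. \<Sum>j<n. measure M (A i \<inter> A j) - p * p)"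
    unfolding square_eq by (simp add: integrable_product integral_product)
  also have "\<dots> \<le> (\<Sum>i<n. \<Sum>j<n. if j = i then 1 else w (if j < i then i - j else j - i))"
    using cov_le by (intro sum_mono) (simp add: abs_le_iff)
  also have "\<dots> \<le> (\<Sum>i<n. 1 + 2 * suminf w)"
    by (intro sum_mono sum_lag_weights_le w)
  finally show "(\<integral>\<omega>. (\<Sum>i<n. indicator (A i) \<omega> - p)\<^sup>2 \<partial>M) \<le> real n * (1 + 2 * suminf w)"
    by simp
qed

lemma prob_frequency_deviation_le:
  assumes "prob_space M"
    and A: "\<And>i. A i \<in> sets M" and prob_A: "\<And>i. measure M (A i) = p"
    and cov: "\<And>i j. i < j \<Longrightarrow> \<bar>measure M (A i \<inter> A j) - p * p\<bar> \<le> w (j - i)"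
    and w: "summable w" "\<And>k. 0 \<le> w k"
    and "0 < n" "0 < \<eta>"
  shows "measure M {\<omega>\<in>space M. \<eta> < \<bar>(1 / real n) * (\<Sum>i<n. indicator (A i) \<omega>) - p\<bar>}
          \<le> (1 + 2 * suminf w) / (real n * \<eta>\<^sup>2)"
proof -
  interpret prob_space M by fact
  define S where "S \<omega> = (\<Sum>i<n. indicator (A i) \<omega> - p)" for \<omega>
  note S_square = integral_square_sum_centered_indicators_le[OF assms(1-6), of n, folded S_def]
  have "{\<omega>\<in>space M. \<eta> < \<bar>(1 / real n) * (\<Sum>i<n. indicator (A i) \<omega>) - p\<bar>}
      \<subseteq> {\<omega>\<in>space M. (real n * \<eta>)\<^sup>2 \<le> (S \<omega>)\<^sup>2}"
  proof safe
    fix \<omega> assume "\<eta> < \<bar>(1 / real n) * (\<Sum>i<n. indicator (A i) \<omega>) - p\<bar>"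
    also have "(1 / real n) * (\<Sum>i<n. indicator (A i) \<omega>) - p = S \<omega> / real n"
      using \<open>0 < n\<close> by (simp add: S_def sum_subtractf field_simps)
    finally have "real n * \<eta> \<le> \<bar>S \<omega>\<bar>"
      using \<open>0 < n\<close> by (simp add: field_simps)
    then show "(real n * \<eta>)\<^sup>2 \<le> (S \<omega>)\<^sup>2"
      using \<open>0 < n\<close> \<open>0 < \<eta>\<close> by (simp add: abs_le_square_iff[symmetric])
  qed
  then have "measure M {\<omega>\<in>space M. \<eta> < \<bar>(1 / real n) * (\<Sum>i<n. indicator (A i) \<omega>) - p\<bar>}
      \<le> measure M {\<omega>\<in>space M. (real n * \<eta>)\<^sup>2 \<le> (S \<omega>)\<^sup>2}"
    using A by (intro finite_measure_mono) (simp_all add: S_def)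
  also have "\<dots> \<le> (\<integral>\<omega>. (S \<omega>)\<^sup>2 \<partial>M) / (real n * \<eta>)\<^sup>2"
    using \<open>0 < n\<close> \<open>0 < \<eta>\<close>
    by (intro integral_Markov_inequality_measure[OF S_square(1), where A="space M"]) auto
  also have "\<dots> \<le> real n * (1 + 2 * suminf w) / (real n * \<eta>)\<^sup>2"
    by (intro divide_right_mono S_square(2) zero_le_power2)
  also have "\<dots> = (1 + 2 * suminf w) / (real n * \<eta>\<^sup>2)"
    using \<open>0 < n\<close> by (simp add: power2_eq_square)
  finally show ?thesis .
qed

section \<open>Conditional expectation given a finitely-valued variable\<close>

text \<open>The elementary conditional expectation E[f | Z = z]; it is 0 on atoms of measure zero.\<close>

definition cond_mean :: "'a measure \<Rightarrow> ('a \<Rightarrow> 'z) \<Rightarrow> ('a \<Rightarrow> real) \<Rightarrow> 'z \<Rightarrow> real" where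
  "cond_mean M Z f z =
     (\<integral>\<omega>. indicator {\<omega>\<in>space M. Z \<omega> = z} \<omega> * f \<omega> \<partial>M) / measure M {\<omega>\<in>space M. Z \<omega> = z}"

lemma sets_vimage_count_space:
  assumes "Z \<in> M \<rightarrow>\<^sub>M count_space UNIV"
  shows "sets (vimage_algebra (space M) Z (count_space UNIV)) = {Z -` B \<inter> space M | B. True}"
  using sets_vimage_algebra2[of Z "space M" "count_space UNIV"] by auto

lemma real_cond_exp_vimage_count_space:
  assumes "finite_measure M" and Z: "Z \<in> M \<rightarrow>\<^sub>M count_space UNIV" and f: "integrable M f"
    and \<omega>: "\<omega> \<in> space M" and positive: "measure M {\<omega>'\<in>space M. Z \<omega>' = Z \<omega>} \<noteq> 0"
  shows "real_cond_exp M (vimage_algebra (space M) Z (count_space UNIV)) f \<omega> = cond_mean M Z f (Z \<omega>)"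
proof -
  interpret finite_measure M by fact
  define F where "F = vimage_algebra (space M) Z (count_space UNIV)"
  define u where "u = real_cond_exp M F f"
  define level where "level = {\<omega>'\<in>space M. Z \<omega>' = Z \<omega>}"
  have sets_F: "sets F = {Z -` B \<inter> space M | B. True}"
    unfolding F_def by (rule sets_vimage_count_space[OF Z])
  have "sets F \<subseteq> sets M"
    unfolding sets_F using Z by (auto intro: measurable_sets)
  then interpret F: sigma_finite_subalgebra M F
    by (intro finite_measure_subalgebra_is_sigma_finite finite_measure_subalgebra.intro
        finite_measure_subalgebra_axioms.intro finite_measure_axioms) (simp add: subalgebra_def F_def)
  have level_F: "level \<in> sets F"
    unfolding sets_F level_def by blast
  \<comment> \<open>An \<open>F\<close>-measurable function is a function of \<open>Z\<close>, hence constant on the atom \<open>level\<close>.\<close>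
  have "u -` {u \<omega>} \<inter> space F \<in> sets F"
    unfolding u_def by (rule measurable_sets[OF borel_measurable_cond_exp]) simp
  then obtain B where B: "u -` {u \<omega>} \<inter> space M = Z -` B \<inter> space M"
    unfolding sets_F by (auto simp: F_def)
  have u_const: "u \<omega>' = u \<omega>" if "\<omega>' \<in> level" for \<omega>'
    using B \<omega> that unfolding level_def by blast
  have "(\<integral>\<omega>'. indicator level \<omega>' * f \<omega>' \<partial>M) = (\<integral>\<omega>'. indicator level \<omega>' * u \<omega>' \<partial>M)"
    using F.real_cond_exp_intA[OF f level_F] by (simp add: u_def set_lebesgue_integral_def)
  also have "\<dots> = (\<integral>\<omega>'. indicator level \<omega>' * u \<omega> \<partial>M)"
    by (rule Bochner_Integration.integral_cong) (auto simp: indicator_def u_const)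
  also have "\<dots> = measure M level * u \<omega>"
    using Int_absorb2[of level "space M"] by (simp add: level_def)
  finally show ?thesis
    using positive by (simp add: cond_mean_def u_def F_def level_def)
qed

lemma abs_cond_mean_le:
  assumes "finite_measure M" and Z: "Z \<in> M \<rightarrow>\<^sub>M count_space UNIV"
    and f: "f \<in> borel_measurable M" and bound: "\<And>\<omega>. \<omega> \<in> space M \<Longrightarrow> \<bar>f \<omega>\<bar> \<le> B" and "0 \<le> B"
  shows "\<bar>cond_mean M Z f z\<bar> \<le> B"
proof -
  interpret finite_measure M by fact
  define level where "level = {\<omega>\<in>space M. Z \<omega> = z}"
  have level: "level \<in> sets M"
    unfolding level_def using Z by measurable
  have "integrable M f"
    using f bound by (intro integrable_const_bound[where B=B]) auto
  then have "integrable M (\<lambda>\<omega>. indicator level \<omega> * f \<omega>)"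
    using integrable_mult_indicator[OF level, of f] by simp
  moreover have "integrable M (\<lambda>\<omega>. indicator level \<omega> * B)"
    using level by (intro integrable_mult_left integrable_real_indicator) (simp_all add: less_top[symmetric])
  ultimately have "(\<integral>\<omega>. \<bar>indicator level \<omega> * f \<omega>\<bar> \<partial>M) \<le> (\<integral>\<omega>. indicator level \<omega> * B \<partial>M)"
    using bound by (intro integral_mono integrable_abs) (simp_all add: indicator_def)
  then have "\<bar>\<integral>\<omega>. indicator level \<omega> * f \<omega> \<partial>M\<bar> \<le> B * measure M level"
    using level by (intro order_trans[OF integral_abs_bound]) (simp add: mult.commute)
  then show ?thesis
    using \<open>0 \<le> B\<close>
    by (cases "measure M level = 0") (simp_all add: cond_mean_def level_def abs_divide divide_le_eq)
qed

lemma cond_mean_distr: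
  assumes X: "X \<in> M \<rightarrow>\<^sub>M N" and \<zeta>: "\<zeta> \<in> N \<rightarrow>\<^sub>M count_space UNIV" and \<phi>: "\<phi> \<in> borel_measurable N"
  shows "cond_mean M (\<lambda>\<omega>. \<zeta> (X \<omega>)) (\<lambda>\<omega>. \<phi> (X \<omega>)) z = cond_mean (distr M N X) \<zeta> \<phi> z"
proof -
  have level: "{x\<in>space N. \<zeta> x = z} \<in> sets N"
    using \<zeta> by measurable
  have "X -` {x\<in>space N. \<zeta> x = z} \<inter> space M = {\<omega>\<in>space M. \<zeta> (X \<omega>) = z}"
    using measurable_space[OF X] by auto
  moreover have "(\<integral>x. indicator {x\<in>space N. \<zeta> x = z} x * \<phi> x \<partial>distr M N X)
      = (\<integral>\<omega>. indicator {\<omega>\<in>space M. \<zeta> (X \<omega>) = z} \<omega> * \<phi> (X \<omega>) \<partial>M)"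
    using level \<phi> measurable_space[OF X]
    by (subst integral_distr[OF X]) (auto intro!: Bochner_Integration.integral_cong simp: indicator_def)
  ultimately show ?thesis
    unfolding cond_mean_def using measure_distr[OF X level] by simp
qed

lemma AE_measure_level_set_nonzero:
  fixes Z :: "'a \<Rightarrow> 'z::countable"
  assumes "finite_measure M" and Z: "Z \<in> M \<rightarrow>\<^sub>M count_space UNIV"
  shows "AE \<omega> in M. measure M {\<omega>'\<in>space M. Z \<omega>' = Z \<omega>} \<noteq> 0"
proof -
  interpret finite_measure M by fact
  define level where "level z = {\<omega>\<in>space M. Z \<omega> = z}" for z
  have "level z \<in> sets M" for z
    unfolding level_def using Z by measurable
  then have "(\<Union>z\<in>{z. measure M (level z) = 0}. level z) \<in> null_sets M"
    by (intro null_sets_UN') (simp_all add: null_sets_def emeasure_eq_measure)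
  moreover have "{\<omega>\<in>space M. \<not> measure M (level (Z \<omega>)) \<noteq> 0} \<subseteq> (\<Union>z\<in>{z. measure M (level z) = 0}. level z)"
    by (auto simp: level_def)
  ultimately show ?thesis
    unfolding level_def by (rule AE_I')
qed

lemma integral_comp_finite_valued:
  fixes Z :: "'a \<Rightarrow> 'z::finite"
  assumes "finite_measure M" and Z: "Z \<in> M \<rightarrow>\<^sub>M count_space UNIV"
  shows "(\<integral>\<omega>. \<phi> (Z \<omega>) \<partial>M) = (\<Sum>z\<in>UNIV. \<phi> z * measure M {\<omega>\<in>space M. Z \<omega> = z})"
proof -
  interpret finite_measure M by fact
  have level: "{\<omega>\<in>space M. Z \<omega> = z} \<in> sets M" for z
    using Z by measurable
  have "(\<integral>\<omega>. \<phi> (Z \<omega>) \<partial>M) = (\<integral>\<omega>. (\<Sum>z\<in>UNIV. \<phi> z * indicator {\<omega>\<in>space M. Z \<omega> = z} \<omega>) \<partial>M)"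
    by (intro Bochner_Integration.integral_cong) (simp_all add: indicator_def if_distrib sum.delta')
  also have "\<dots> = (\<Sum>z\<in>UNIV. \<phi> z * measure M {\<omega>\<in>space M. Z \<omega> = z})"
    using level by (subst Bochner_Integration.integral_sum) (auto simp: less_top[symmetric])
  finally show ?thesis .
qed

lemma average_comp_finite_valued_eq:
  fixes x :: "nat \<Rightarrow> 'z::finite" and \<phi> q :: "'z \<Rightarrow> real"
  shows "(1 / real n) * (\<Sum>i<n. \<phi> (x i)) - (\<Sum>z\<in>UNIV. \<phi> z * q z)
       = (\<Sum>z\<in>UNIV. \<phi> z * ((1 / real n) * (\<Sum>i<n. indicator {z} (x i)) - q z))"
proof -
  have "(\<Sum>i<n. \<phi> (x i)) = (\<Sum>i<n. \<Sum>z\<in>UNIV. \<phi> z * indicator {z} (x i))"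
    by (simp add: indicator_def sum.delta)
  also have "\<dots> = (\<Sum>z\<in>UNIV. \<phi> z * (\<Sum>i<n. indicator {z} (x i)))"
    unfolding sum_distrib_left by (rule sum.swap)
  finally show ?thesis
    by (simp only: right_diff_distrib sum_subtractf sum_distrib_left mult.left_commute)
qed

lemma AE_average_cond_exp_square_eq:
  fixes Z :: "nat \<Rightarrow> 'a \<Rightarrow> 'z::finite" and F :: "'g \<Rightarrow> nat \<Rightarrow> 'a \<Rightarrow> real"
  assumes "prob_space M"
    and Z: "\<And>i. Z i \<in> M \<rightarrow>\<^sub>M count_space UNIV"
    and F: "\<And>g i. g \<in> Gs \<Longrightarrow> integrable M (F g i)"
    and level_eq: "\<And>i z. measure M {\<omega>\<in>space M. Z i \<omega> = z} = measure M {\<omega>\<in>space M. Z 0 \<omega> = z}"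
    and cond_mean_eq: "\<And>g i. g \<in> Gs \<Longrightarrow> cond_mean M (Z i) (F g i) = cond_mean M (Z 0) (F g 0)"
  defines "h \<equiv> \<lambda>g i. real_cond_exp M (vimage_algebra (space M) (Z i) (count_space UNIV)) (F g i)"
  shows "AE \<omega> in M. \<forall>g\<in>Gs. \<forall>n.
           (1 / real n) * (\<Sum>i<n. (h g i \<omega>)\<^sup>2) - (\<integral>\<omega>'. (h g 0 \<omega>')\<^sup>2 \<partial>M)
         = (\<Sum>z\<in>UNIV. (cond_mean M (Z 0) (F g 0) z)\<^sup>2 *
              ((1 / real n) * (\<Sum>i<n. indicator {\<omega>'\<in>space M. Z i \<omega>' = z} \<omega>)
               - measure M {\<omega>'\<in>space M. Z 0 \<omega>' = z}))"
proof -
  interpret prob_space M by fact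
  let ?c = "\<lambda>g. cond_mean M (Z 0) (F g 0)"
  have "AE \<omega> in M. \<forall>i. measure M {\<omega>'\<in>space M. Z i \<omega>' = Z i \<omega>} \<noteq> 0"
    unfolding AE_all_countable using Z finite_measure_axioms by (blast intro: AE_measure_level_set_nonzero)
  then have h_eq: "AE \<omega> in M. \<forall>g\<in>Gs. \<forall>i. h g i \<omega> = ?c g (Z i \<omega>)"
  proof (rule AE_mp, intro AE_I2 impI ballI allI)
    fix \<omega> g i
    assume "\<omega> \<in> space M" "\<forall>i. measure M {\<omega>'\<in>space M. Z i \<omega>' = Z i \<omega>} \<noteq> 0" "g \<in> Gs"
    then show "h g i \<omega> = ?c g (Z i \<omega>)"
      unfolding h_def cond_mean_eq[OF \<open>g \<in> Gs\<close>, of i, symmetric]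
      by (intro real_cond_exp_vimage_count_space finite_measure_axioms Z F) auto
  qed
  have expectation_eq: "(\<integral>\<omega>. (h g 0 \<omega>)\<^sup>2 \<partial>M) = (\<Sum>z\<in>UNIV. (?c g z)\<^sup>2 * measure M {\<omega>\<in>space M. Z 0 \<omega> = z})"
    if "g \<in> Gs" for g
  proof -
    from h_eq have "AE \<omega> in M. (h g 0 \<omega>)\<^sup>2 = (?c g (Z 0 \<omega>))\<^sup>2"
      by eventually_elim (use that in simp)
    then have "(\<integral>\<omega>. (h g 0 \<omega>)\<^sup>2 \<partial>M) = (\<integral>\<omega>. (?c g (Z 0 \<omega>))\<^sup>2 \<partial>M)"
      using Z[of 0] by (intro integral_cong_AE) (simp_all add: h_def borel_measurable_cond_exp2)
    also have "\<dots> = (\<Sum>z\<in>UNIV. (?c g z)\<^sup>2 * measure M {\<omega>\<in>space M. Z 0 \<omega> = z})"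
      by (rule integral_comp_finite_valued[OF finite_measure_axioms Z])
    finally show ?thesis .
  qed
  show ?thesis
    using h_eq AE_space
  proof eventually_elim
    case (elim \<omega>)
    have "indicator {\<omega>'\<in>space M. Z i \<omega>' = z} \<omega> = (indicator {z} (Z i \<omega>) :: real)" for i z
      using elim by (simp add: indicator_def)
    then show ?case
      using elim average_comp_finite_valued_eq[where \<phi>="\<lambda>z. (?c _ z)\<^sup>2"]
      by (simp add: expectation_eq)
  qed
qed

section \<open>Uniform law of large numbers for squared conditional expectations\<close>

lemma outer_prob_nonneg: "0 \<le> outer_prob M A"
  unfolding outer_prob_def by (rule cInf_greatest) auto

lemma outer_prob_le_measure:
  assumes "B \<in> sets M" "A \<inter> space M \<subseteq> B"
  shows "outer_prob M A \<le> measure M B"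
  unfolding outer_prob_def using assms by (intro cInf_lower bdd_belowI[where m=0]) auto

lemma outer_prob_tendsto_zero:
  assumes "\<And>n. 0 < n \<Longrightarrow> \<exists>B\<in>sets M. E n \<inter> space M \<subseteq> B \<and> measure M B \<le> C / real n"
  shows "(\<lambda>n. outer_prob M (E n)) \<longlonglongrightarrow> 0"
proof (rule tendsto_sandwich[of "\<lambda>_. 0" _ _ "\<lambda>n. C / real n"])
  show "\<forall>\<^sub>F n in sequentially. outer_prob M (E n) \<le> C / real n"
    using eventually_gt_at_top[of 0]
  proof eventually_elim
    case (elim n)
    then obtain B where "B \<in> sets M" "E n \<inter> space M \<subseteq> B" "measure M B \<le> C / real n"
      using assms by blast
    then show ?case
      using outer_prob_le_measure[of B M "E n"] by linarith
  qed
qed (simp_all add: outer_prob_nonneg lim_const_over_n)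

lemma abs_sum_mult_le:
  fixes a d :: "'z::finite \<Rightarrow> real"
  assumes "\<And>z. \<bar>a z\<bar> \<le> A" "\<And>z. \<bar>d z\<bar> \<le> \<eta>"
  shows "\<bar>\<Sum>z\<in>UNIV. a z * d z\<bar> \<le> real CARD('z) * (A * \<eta>)"
proof -
  have "\<bar>\<Sum>z\<in>UNIV. a z * d z\<bar> \<le> (\<Sum>z\<in>UNIV. \<bar>a z\<bar> * \<bar>d z\<bar>)"
    using sum_abs[of "\<lambda>z. a z * d z" UNIV] by (simp add: abs_mult)
  also have "\<dots> \<le> (\<Sum>z\<in>(UNIV :: 'z set). A * \<eta>)"
  proof (rule sum_mono)
    fix z
    have "0 \<le> A" using assms(1)[of z] by linarith
    then show "\<bar>a z\<bar> * \<bar>d z\<bar> \<le> A * \<eta>"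
      using assms by (intro mult_mono) auto
  qed
  finally show ?thesis by simp
qed

lemma AE_average_cond_exp_square_deviation_le:
  fixes Z :: "nat \<Rightarrow> 'a \<Rightarrow> 'z::finite" and F :: "'g \<Rightarrow> nat \<Rightarrow> 'a \<Rightarrow> real"
  assumes "prob_space M"
    and Z: "\<And>i. Z i \<in> M \<rightarrow>\<^sub>M count_space UNIV"
    and F: "\<And>g i. g \<in> Gs \<Longrightarrow> F g i \<in> borel_measurable M"
    and F_bound: "\<And>g i \<omega>. g \<in> Gs \<Longrightarrow> \<omega> \<in> space M \<Longrightarrow> \<bar>F g i \<omega>\<bar> \<le> B" and "0 \<le> B"
    and level_eq: "\<And>i z. measure M {\<omega>\<in>space M. Z i \<omega> = z} = measure M {\<omega>\<in>space M. Z 0 \<omega> = z}"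
    and cond_mean_eq: "\<And>g i. g \<in> Gs \<Longrightarrow> cond_mean M (Z i) (F g i) = cond_mean M (Z 0) (F g 0)"
  defines "h \<equiv> \<lambda>g i. real_cond_exp M (vimage_algebra (space M) (Z i) (count_space UNIV)) (F g i)"
  shows "AE \<omega> in M. \<forall>n \<eta>.
           (\<forall>z. \<bar>(1 / real n) * (\<Sum>i<n. indicator {\<omega>'\<in>space M. Z i \<omega>' = z} \<omega>)
                  - measure M {\<omega>'\<in>space M. Z 0 \<omega>' = z}\<bar> \<le> \<eta>) \<longrightarrow>
           (\<forall>g\<in>Gs. \<bar>(1 / real n) * (\<Sum>i<n. (h g i \<omega>)\<^sup>2) - (\<integral>\<omega>'. (h g 0 \<omega>')\<^sup>2 \<partial>M)\<bar>
                    \<le> real CARD('z) * (B\<^sup>2 * \<eta>))"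
proof -
  interpret prob_space M by fact
  let ?c = "\<lambda>g. cond_mean M (Z 0) (F g 0)"
  have c_square_bound: "\<bar>(?c g z)\<^sup>2\<bar> \<le> B\<^sup>2" if "g \<in> Gs" for g z
  proof -
    have "\<bar>?c g z\<bar> \<le> B"
      by (rule abs_cond_mean_le[OF finite_measure_axioms Z]) (use F F_bound that \<open>0 \<le> B\<close> in auto)
    then show ?thesis
      using \<open>0 \<le> B\<close> abs_le_square_iff[of "?c g z" B] by simp
  qed
  have "AE \<omega> in M. \<forall>g\<in>Gs. \<forall>n.
           (1 / real n) * (\<Sum>i<n. (h g i \<omega>)\<^sup>2) - (\<integral>\<omega>'. (h g 0 \<omega>')\<^sup>2 \<partial>M)
         = (\<Sum>z\<in>UNIV. (?c g z)\<^sup>2 *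
              ((1 / real n) * (\<Sum>i<n. indicator {\<omega>'\<in>space M. Z i \<omega>' = z} \<omega>)
               - measure M {\<omega>'\<in>space M. Z 0 \<omega>' = z}))"
    unfolding h_def using F F_bound
    by (intro AE_average_cond_exp_square_eq assms(1) Z level_eq cond_mean_eq
        integrable_const_bound[where B=B]) auto
  then show ?thesis
  proof eventually_elim
    case (elim \<omega>)
    show ?case
    proof (intro allI impI ballI)
      fix n \<eta> g
      assume "\<forall>z. \<bar>(1 / real n) * (\<Sum>i<n. indicator {\<omega>'\<in>space M. Z i \<omega>' = z} \<omega>)
                  - measure M {\<omega>'\<in>space M. Z 0 \<omega>' = z}\<bar> \<le> \<eta>" and "g \<in> Gs"
      then show "\<bar>(1 / real n) * (\<Sum>i<n. (h g i \<omega>)\<^sup>2) - (\<integral>\<omega>'. (h g 0 \<omega>')\<^sup>2 \<partial>M)\<bar>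
          \<le> real CARD('z) * (B\<^sup>2 * \<eta>)"
        unfolding elim[rule_format, OF \<open>g \<in> Gs\<close>]
        by (intro abs_sum_mult_le c_square_bound) auto
    qed
  qed
qed

lemma uniform_lln_cond_exp_square:
  fixes Z :: "nat \<Rightarrow> 'a \<Rightarrow> 'z::finite" and F :: "'g \<Rightarrow> nat \<Rightarrow> 'a \<Rightarrow> real"
  assumes "prob_space M"
    and Z: "\<And>i. Z i \<in> M \<rightarrow>\<^sub>M count_space UNIV"
    and F: "\<And>g i. g \<in> Gs \<Longrightarrow> F g i \<in> borel_measurable M"
    and F_bound: "\<And>g i \<omega>. g \<in> Gs \<Longrightarrow> \<omega> \<in> space M \<Longrightarrow> \<bar>F g i \<omega>\<bar> \<le> B" and "0 < B"
    and level_eq: "\<And>i z. measure M {\<omega>\<in>space M. Z i \<omega> = z} = measure M {\<omega>\<in>space M. Z 0 \<omega> = z}"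
    and cond_mean_eq: "\<And>g i. g \<in> Gs \<Longrightarrow> cond_mean M (Z i) (F g i) = cond_mean M (Z 0) (F g 0)"
    and cov: "\<And>i j z. i < j \<Longrightarrow>
      \<bar>measure M ({\<omega>\<in>space M. Z i \<omega> = z} \<inter> {\<omega>\<in>space M. Z j \<omega> = z})
       - measure M {\<omega>\<in>space M. Z i \<omega> = z} * measure M {\<omega>\<in>space M. Z j \<omega> = z}\<bar> \<le> w (j - i)"
    and w: "summable w" "\<And>k. 0 \<le> w k"
    and "0 < \<epsilon>"
  defines "h \<equiv> \<lambda>g i. real_cond_exp M (vimage_algebra (space M) (Z i) (count_space UNIV)) (F g i)"
  shows "(\<lambda>n. outer_prob M {\<omega>\<in>space M.
            (SUP g\<in>Gs. ereal \<bar>(1 / real n) * (\<Sum>i<n. (h g i \<omega>)\<^sup>2) - (\<integral>\<omega>'. (h g 0 \<omega>')\<^sup>2 \<partial>M)\<bar>)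
            > ereal \<epsilon>}) \<longlonglongrightarrow> 0"
proof -
  interpret prob_space M by fact
  let ?L = "\<lambda>i z. {\<omega>\<in>space M. Z i \<omega> = z}"
  define dev where "dev n z \<omega> = (1 / real n) * (\<Sum>i<n. indicator (?L i z) \<omega>) - measure M (?L 0 z)"
    for n z \<omega>
  define \<eta> where "\<eta> = \<epsilon> / (real CARD('z) * B\<^sup>2)"
  have "0 < \<eta>"
    using \<open>0 < \<epsilon>\<close> \<open>0 < B\<close> by (simp add: \<eta>_def)
  have L: "?L i z \<in> sets M" for i z
    using Z by measurable
  have "AE \<omega> in M. \<forall>n \<eta>'. (\<forall>z. \<bar>dev n z \<omega>\<bar> \<le> \<eta>') \<longrightarrow>
      (\<forall>g\<in>Gs. \<bar>(1 / real n) * (\<Sum>i<n. (h g i \<omega>)\<^sup>2) - (\<integral>\<omega>'. (h g 0 \<omega>')\<^sup>2 \<partial>M)\<bar>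
                \<le> real CARD('z) * (B\<^sup>2 * \<eta>'))"
    unfolding h_def dev_def
    by (rule AE_average_cond_exp_square_deviation_le)
       (fact assms(1) Z F F_bound level_eq cond_mean_eq less_imp_le[OF \<open>0 < B\<close>])+
  then obtain N where deviation_le: "\<And>\<omega>. \<omega> \<in> space M - N \<Longrightarrow> \<forall>n \<eta>'. (\<forall>z. \<bar>dev n z \<omega>\<bar> \<le> \<eta>') \<longrightarrow>
      (\<forall>g\<in>Gs. \<bar>(1 / real n) * (\<Sum>i<n. (h g i \<omega>)\<^sup>2) - (\<integral>\<omega>'. (h g 0 \<omega>')\<^sup>2 \<partial>M)\<bar>
                \<le> real CARD('z) * (B\<^sup>2 * \<eta>'))" and N: "N \<in> null_sets M"
    by (elim AE_E3) blast
  have "real CARD('z) * (B\<^sup>2 * \<eta>) = \<epsilon>"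
    using \<open>0 < B\<close> by (simp add: \<eta>_def)
  have cov_stationary: "\<bar>measure M (?L i z \<inter> ?L j z) - measure M (?L 0 z) * measure M (?L 0 z)\<bar>
      \<le> w (j - i)" if "i < j" for i j z
    using cov[OF that, of z] unfolding level_eq[of i z] level_eq[of j z] .
  define Bad where "Bad n = (\<Union>z. {\<omega>\<in>space M. \<eta> < \<bar>dev n z \<omega>\<bar>}) \<union> N" for n
  show ?thesis
  proof (rule outer_prob_tendsto_zero[where C = "real CARD('z) * (1 + 2 * suminf w) / \<eta>\<^sup>2"],
      intro bexI conjI)
    fix n :: nat assume "0 < n"
    show "Bad n \<in> sets M"
      using N L unfolding Bad_def dev_def by auto
    have "(SUP g\<in>Gs. ereal \<bar>(1 / real n) * (\<Sum>i<n. (h g i \<omega>)\<^sup>2) - (\<integral>\<omega>'. (h g 0 \<omega>')\<^sup>2 \<partial>M)\<bar>)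
        \<le> ereal \<epsilon>" if "\<omega> \<in> space M - Bad n" for \<omega>
      using that deviation_le[of \<omega>] \<open>real CARD('z) * (B\<^sup>2 * \<eta>) = \<epsilon>\<close>
      by (intro SUP_least) (auto simp: Bad_def not_less)
    then show "{\<omega>\<in>space M.
        (SUP g\<in>Gs. ereal \<bar>(1 / real n) * (\<Sum>i<n. (h g i \<omega>)\<^sup>2) - (\<integral>\<omega>'. (h g 0 \<omega>')\<^sup>2 \<partial>M)\<bar>)
        > ereal \<epsilon>} \<inter> space M \<subseteq> Bad n"
      by (auto simp: linorder_not_less[symmetric])
    have "measure M (Bad n) = measure M (\<Union>z. {\<omega>\<in>space M. \<eta> < \<bar>dev n z \<omega>\<bar>})"
      unfolding Bad_def using L N by (intro measure_Un_null_set) (auto simp: dev_def)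
    also have "\<dots> \<le> (\<Sum>z\<in>UNIV. measure M {\<omega>\<in>space M. \<eta> < \<bar>dev n z \<omega>\<bar>})"
      using L by (intro measure_UNION_le) (auto simp: dev_def)
    also have "\<dots> \<le> (\<Sum>z\<in>(UNIV :: 'z set). (1 + 2 * suminf w) / (real n * \<eta>\<^sup>2))"
      unfolding dev_def using L level_eq cov_stationary w \<open>0 < n\<close> \<open>0 < \<eta>\<close>
      by (intro sum_mono prob_frequency_deviation_le[OF assms(1)]) auto
    finally show "measure M (Bad n) \<le> real CARD('z) * (1 + 2 * suminf w) / \<eta>\<^sup>2 / real n"
      by (simp add: mult.commute)
  qed
qed

lemma stationary_mixing_uniform_lln_cond_exp_square:
  fixes X :: "nat \<Rightarrow> 'a \<Rightarrow> 'x" and \<zeta> :: "'x \<Rightarrow> 'z::finite" and \<Phi> :: "'g \<Rightarrow> 'x \<Rightarrow> real"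
  assumes "prob_space M" and X: "\<And>i. X i \<in> M \<rightarrow>\<^sub>M MX"
    and stationary: "strictly_stationary M MX X"
    and mixing: "summable (\<lambda>k. real k powr e * beta_mix M MX X k)" and "0 \<le> e"
    and \<zeta>: "\<zeta> \<in> MX \<rightarrow>\<^sub>M count_space UNIV"
    and \<Phi>: "\<And>g. g \<in> Gs \<Longrightarrow> \<Phi> g \<in> borel_measurable MX"
    and \<Phi>_bound: "\<And>g x. g \<in> Gs \<Longrightarrow> x \<in> space MX \<Longrightarrow> \<bar>\<Phi> g x\<bar> \<le> B" and "0 < B"
    and "0 < \<epsilon>"
  defines "h \<equiv> \<lambda>g i. real_cond_exp M (vimage_algebra (space M) (\<lambda>\<omega>. \<zeta> (X i \<omega>)) (count_space UNIV))
                      (\<lambda>\<omega>. \<Phi> g (X i \<omega>))"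
  shows "(\<lambda>n. outer_prob M {\<omega>\<in>space M.
            (SUP g\<in>Gs. ereal \<bar>(1 / real n) * (\<Sum>i<n. (h g i \<omega>)\<^sup>2) - (\<integral>\<omega>'. (h g 0 \<omega>')\<^sup>2 \<partial>M)\<bar>)
            > ereal \<epsilon>}) \<longlonglongrightarrow> 0"
  unfolding h_def
proof (rule uniform_lln_cond_exp_square[OF assms(1), where B = B
    and w = "\<lambda>k. 2 * (real k powr e * beta_mix M MX X k)"])
  have distr_eq: "distr M MX (X i) = distr M MX (X 0)" for i
    by (rule strictly_stationary_distr_eq[OF stationary X])
  have level_eq: "{\<omega>\<in>space M. \<zeta> (X i \<omega>) = z} = X i -` (\<zeta> -` {z} \<inter> space MX) \<inter> space M" for i z
    using measurable_space[OF X] by auto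
  have level_MX: "\<zeta> -` {z} \<inter> space MX \<in> sets MX" for z
    using \<zeta> by measurable
  show "(\<lambda>\<omega>. \<zeta> (X i \<omega>)) \<in> M \<rightarrow>\<^sub>M count_space UNIV" for i
    using X \<zeta> by measurable
  show "(\<lambda>\<omega>. \<Phi> g (X i \<omega>)) \<in> borel_measurable M" if "g \<in> Gs" for g i
    using X \<Phi>[OF that] by measurable
  show "\<bar>\<Phi> g (X i \<omega>)\<bar> \<le> B" if "g \<in> Gs" "\<omega> \<in> space M" for g i \<omega>
    using \<Phi>_bound that measurable_space[OF X] by blast
  show "measure M {\<omega>\<in>space M. \<zeta> (X i \<omega>) = z} = measure M {\<omega>\<in>space M. \<zeta> (X 0 \<omega>) = z}" for i z
    unfolding level_eq using measure_distr[OF X level_MX] distr_eq by metis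
  show "cond_mean M (\<lambda>\<omega>. \<zeta> (X i \<omega>)) (\<lambda>\<omega>. \<Phi> g (X i \<omega>)) = cond_mean M (\<lambda>\<omega>. \<zeta> (X 0 \<omega>)) (\<lambda>\<omega>. \<Phi> g (X 0 \<omega>))"
    if "g \<in> Gs" for g i
    using cond_mean_distr[OF X \<zeta> \<Phi>[OF that]] by (simp add: fun_eq_iff distr_eq[of i])
  show "\<bar>measure M ({\<omega>\<in>space M. \<zeta> (X i \<omega>) = z} \<inter> {\<omega>\<in>space M. \<zeta> (X j \<omega>) = z})
        - measure M {\<omega>\<in>space M. \<zeta> (X i \<omega>) = z} * measure M {\<omega>\<in>space M. \<zeta> (X j \<omega>) = z}\<bar>
        \<le> 2 * (real (j - i) powr e * beta_mix M MX X (j - i))" if "i < j" for i j z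
    unfolding level_eq by (rule mixing_covariance_le[OF assms(1) X level_MX \<open>0 \<le> e\<close> that])
  show "summable (\<lambda>k. 2 * (real k powr e * beta_mix M MX X k))"
    by (rule summable_mult[OF mixing])
  show "0 \<le> 2 * (real k powr e * beta_mix M MX X k)" for k
    using beta_mix_nonneg[where X=X, OF assms(1) X] by simp
qed (fact assms)+

section \<open>The MDP with unobserved confounders\<close>

lemma mix_exponent_nonneg:
  assumes "2 < p"
  shows "0 \<le> mix_exponent p"
  using assms by (cases p) (auto simp: mix_exponent_def)

lemma normalized_class_measurable:
  assumes "g \<in> normalized_class G nrm" "\<And>g. g \<in> G \<Longrightarrow> g a \<in> borel_measurable N"
  shows "g a \<in> borel_measurable N"
  using assms unfolding normalized_class_def by auto

lemma borel_measurable_eval_acA_stS_cfU: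
  fixes g :: "'a::countable \<Rightarrow> 's::countable \<times> 'u \<Rightarrow> real"
  assumes "\<And>a. g a \<in> borel_measurable (count_space UNIV \<Otimes>\<^sub>M MU)"
  shows "(\<lambda>x. g (acA x) (stS x, cfU x)) \<in> borel_measurable (count_space (UNIV :: ('s \<times> 'a \<times> 's) set) \<Otimes>\<^sub>M MU)"
proof (rule measurable_compose_countable[where f = "\<lambda>a x. g a (stS x, cfU x)"])
  let ?MX = "count_space (UNIV :: ('s \<times> 'a \<times> 's) set) \<Otimes>\<^sub>M MU"
  have state_confounder: "(\<lambda>x. (stS x, cfU x)) \<in> ?MX \<rightarrow>\<^sub>M count_space UNIV \<Otimes>\<^sub>M MU"
    unfolding stS_def cfU_def
    by (intro measurable_Pair measurable_snd measurable_compose[OF measurable_fst]) simp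
  show "(\<lambda>x. g a (stS x, cfU x)) \<in> borel_measurable ?MX" for a
    using measurable_compose[OF state_confounder assms[of a]] .
  show "acA \<in> ?MX \<rightarrow>\<^sub>M count_space UNIV"
    unfolding acA_def[abs_def] by (rule measurable_compose[OF measurable_fst]) simp
qed

theorem lemma6:
  fixes M :: "'w measure"
    and MU :: "'u measure"
    and X :: "nat \<Rightarrow> 'w \<Rightarrow> ('s::finite \<times> 'a::finite \<times> 's) \<times> 'u"
    and p :: ereal
    and G :: "('a \<Rightarrow> 's \<times> 'u \<Rightarrow> real) set"
    and nrm :: "('a \<Rightarrow> 's \<times> 'u \<Rightarrow> real) \<Rightarrow> real"
    and Gb :: real
  defines "MX \<equiv> (count_space UNIV \<Otimes>\<^sub>M count_space UNIV \<Otimes>\<^sub>M count_space UNIV) \<Otimes>\<^sub>M MU"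
    and "MSU \<equiv> count_space UNIV \<Otimes>\<^sub>M MU"
    and "Gs \<equiv> normalized_class G nrm"
    and "h \<equiv> (\<lambda>g i \<omega>. real_cond_exp M
                 (vimage_algebra (space M) (\<lambda>\<omega>. obsZ (X i \<omega>)) (count_space UNIV))
                 (\<lambda>\<omega>. g (acA (X i \<omega>)) (stS (X i \<omega>), cfU (X i \<omega>))) \<omega>)"
  assumes prob: "prob_space M"
    and X_meas: "\<And>i. X i \<in> measurable M MX"
    (* stationary chain of X *)
    and stat: "strictly_stationary M MX X"
    and markov: "\<And>i. cond_indep M (gen_sets M MX X {Suc i}) (gen_sets M MX X {..<i})
                                    (gen_sets M MX X {i})"
    (* iid confounders: U_i independent of the past and of S_i *)
    and iid_conf: "\<And>i. prob_space.indep_set M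
                     (rv_sets M MU (\<lambda>\<omega>. cfU (X i \<omega>)))
                     (join_sets M (gen_sets M MX X {..<i})
                                  (rv_sets M (count_space UNIV) (\<lambda>\<omega>. stS (X i \<omega>))))"
    (* behaviour policy: A_i depends on the past only through (S_i, U_i) *)
    and policy: "\<And>i. cond_indep M (rv_sets M (count_space UNIV) (\<lambda>\<omega>. acA (X i \<omega>)))
                     (gen_sets M MX X {..<i})
                     (rv_sets M MSU (\<lambda>\<omega>. (stS (X i \<omega>), cfU (X i \<omega>))))"
    (* MDPUC transition: S'_i depends on the past only through (S_i, A_i, U_i) *)
    and transition: "\<And>i. cond_indep M (rv_sets M (count_space UNIV) (\<lambda>\<omega>. stS' (X i \<omega>)))
                     (gen_sets M MX X {..<i})
                     (join_sets M (rv_sets M MSU (\<lambda>\<omega>. (stS (X i \<omega>), cfU (X i \<omega>))))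
                                  (rv_sets M (count_space UNIV) (\<lambda>\<omega>. acA (X i \<omega>))))"
    (* normed class of measurable functions *)
    and norm: "is_norm_on_fun nrm"
    and G_meas: "\<And>g a. g \<in> G \<Longrightarrow> g a \<in> borel_measurable MSU"
    (* Mixing *)
    and p_gt: "2 < p"
    and mixing: "summable (\<lambda>k. real k powr mix_exponent p * beta_mix M MX X k)"
    (* Uniformly Bounded Functions *)
    and Gb_pos: "0 < Gb"
    and bounded: "\<And>g a s u. g \<in> Gs \<Longrightarrow> \<bar>g a (s, u)\<bar> \<le> Gb"
    (* Uniform Bracketing Entropy, L_p w.r.t. the stationary law of (S, U) *)
    and bracketing: "\<And>a. finite_bracketing_integral
                        (distr M MSU (\<lambda>\<omega>. (stS (X 0 \<omega>), cfU (X 0 \<omega>))))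
                        p ((\<lambda>g. g a) ` Gs)"
  shows "\<forall>\<epsilon>>0. (\<lambda>n. outer_prob M
            {\<omega>\<in>space M.
               (SUP g\<in>Gs. ereal \<bar>(1 / real n) * (\<Sum>i<n. (h g i \<omega>)\<^sup>2)
                                - prob_space.expectation M (\<lambda>\<omega>'. (h g 0 \<omega>')\<^sup>2)\<bar>)
               > ereal \<epsilon>}) \<longlonglongrightarrow> 0"
proof (intro allI impI)
  fix \<epsilon> :: real assume "0 < \<epsilon>"
  have MX_eq: "MX = count_space UNIV \<Otimes>\<^sub>M MU"
    unfolding MX_def by (simp add: pair_measure_countable)
  show "(\<lambda>n. outer_prob M {\<omega>\<in>space M.
            (SUP g\<in>Gs. ereal \<bar>(1 / real n) * (\<Sum>i<n. (h g i \<omega>)\<^sup>2)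
                             - prob_space.expectation M (\<lambda>\<omega>'. (h g 0 \<omega>')\<^sup>2)\<bar>)
            > ereal \<epsilon>}) \<longlonglongrightarrow> 0"
    unfolding h_def
  proof (rule stationary_mixing_uniform_lln_cond_exp_square[OF prob X_meas stat mixing
        mix_exponent_nonneg[OF p_gt], where \<zeta> = obsZ and \<Phi> = "\<lambda>g x. g (acA x) (stS x, cfU x)"])
    show "obsZ \<in> MX \<rightarrow>\<^sub>M count_space UNIV"
      unfolding MX_eq obsZ_def by measurable
    show "(\<lambda>x. g (acA x) (stS x, cfU x)) \<in> borel_measurable MX" if "g \<in> Gs" for g
      unfolding MX_eq using that G_meas
      by (intro borel_measurable_eval_acA_stS_cfU normalized_class_measurable[of g G nrm])
         (auto simp: Gs_def MSU_def)
    show "\<bar>g (acA x) (stS x, cfU x)\<bar> \<le> Gb" if "g \<in> Gs" for g x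
      using bounded[OF that] .
  qed (fact Gb_pos \<open>0 < \<epsilon>\<close>)+
qed

end
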